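(* Let $x,y$ be elements both lying in $A$ or both lying in $B$, with $x,y\notin H$, and suppose $x=c^{\alpha}d^{\beta}yc^{\gamma}d^{\delta}$ for some integers $\alpha,\beta,\gamma,\delta$. If $x,y\in A$, then the integers $\alpha+\gamma$, $\beta$ and $\delta$ are uniquely determined by this equality (i.e. any two such representations give the same values). If $x,y\in B$, then $\beta+\delta$, $\alpha$ and $\gamma$ are uniquely determined by this equality.
   Context: Fix integers $m,n>1$ and let $G_{mn}=\langle a,b;\ [a^m,b^n]=1\rangle$. Put $c=a^m$, $d=b^n$, $H=\langle c,d\rangle$ (free abelian with basis $c,d$), $A=\langle a,H\rangle$, $B=\langle b,H\rangle$. *)

theory Defs
  imports "HOL-Algebra.Algebra"
begin

text \<open>G with distinguished elements a, b is (a copy of) the group presented by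
  generators a, b and the single relator [a^m, b^n]: it is a group generated by a, b in which
  the relator holds, and it satisfies the universal property of the presentation.
  Targets K are taken with carrier in nat; this loses nothing, since any group generated by
  two elements is countable and hence isomorphic to a group with carrier a subset of nat.\<close>

definition commutator :: "('g, 'z) monoid_scheme \<Rightarrow> 'g \<Rightarrow> 'g \<Rightarrow> 'g" where
  "commutator G x y = inv\<^bsub>G\<^esub> x \<otimes>\<^bsub>G\<^esub> inv\<^bsub>G\<^esub> y \<otimes>\<^bsub>G\<^esub> x \<otimes>\<^bsub>G\<^esub> y"

definition presents_Gmn :: "'g monoid \<Rightarrow> 'g \<Rightarrow> 'g \<Rightarrow> nat \<Rightarrow> nat \<Rightarrow> bool" where
  "presents_Gmn G a b m n \<longleftrightarrow>
     group G \<and> a \<in> carrier G \<and> b \<in> carrier G \<and>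
     commutator G (a [^]\<^bsub>G\<^esub> m) (b [^]\<^bsub>G\<^esub> n) = \<one>\<^bsub>G\<^esub> \<and>
     carrier G = generate G {a, b} \<and>
     (\<forall>(K :: nat monoid) a' b'.
        group K \<and> a' \<in> carrier K \<and> b' \<in> carrier K \<and>
        commutator K (a' [^]\<^bsub>K\<^esub> m) (b' [^]\<^bsub>K\<^esub> n) = \<one>\<^bsub>K\<^esub>
        \<longrightarrow> (\<exists>h \<in> hom G K. h a = a' \<and> h b = b'))"

end

theory Submission
  imports Defs "HOL-Library.Countable_Set"
begin

text \<open>The exponent sum of a is a homomorphism from G to Z sending c to m and d to 0; it
  determines \<alpha> + \<gamma>. For \<beta> and \<delta>, let G act on the reduced words of the free product
  Z/m * Z, with a acting as the generator of Z/m and b as the generator t of Z. Then c acts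
  trivially and d acts as t^n. Every element y of A outside H has the form c^k w d^j with w a
  reduced word in a and d ending in a power of a, so c^\<alpha> d^\<beta> y c^\<gamma> d^\<delta> sends the empty word
  to the reduced form of t^(n \<beta>) w' t^(n (j + \<delta>)), which determines \<beta> and \<delta>. The statement
  for B follows by exchanging the roles of a and b.\<close>

lemma commutator_eq_one_iff:
  assumes "group K" "x \<in> carrier K" "y \<in> carrier K"
  shows "commutator K x y = \<one>\<^bsub>K\<^esub> \<longleftrightarrow> x \<otimes>\<^bsub>K\<^esub> y = y \<otimes>\<^bsub>K\<^esub> x"
proof -
  interpret group K by fact
  have "commutator K x y = inv\<^bsub>K\<^esub> (y \<otimes>\<^bsub>K\<^esub> x) \<otimes>\<^bsub>K\<^esub> (x \<otimes>\<^bsub>K\<^esub> y)"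
    unfolding commutator_def using assms by (simp add: inv_mult_group m_assoc)
  also have "\<dots> = \<one>\<^bsub>K\<^esub> \<longleftrightarrow> x \<otimes>\<^bsub>K\<^esub> y = y \<otimes>\<^bsub>K\<^esub> x"
    using assms by (metis inv_closed inv_equality inv_inv m_closed r_inv)
  finally show ?thesis .
qed

lemma (in group) int_pow_commute:
  assumes "x \<otimes> y = y \<otimes> x" "x \<in> carrier G" "y \<in> carrier G"
  shows "x [^] (i::int) \<otimes> y [^] (j::int) = y [^] j \<otimes> x [^] i"
proof -
  have inv_commute: "inv z \<otimes> y = y \<otimes> inv z"
    if "z \<otimes> y = y \<otimes> z" "z \<in> carrier G" "y \<in> carrier G" for z y
  proof -
    have "inv z \<otimes> y = inv z \<otimes> (y \<otimes> z) \<otimes> inv z"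
      using that(2,3) by (simp add: m_assoc)
    also have "\<dots> = inv z \<otimes> (z \<otimes> y) \<otimes> inv z"
      by (simp only: that(1))
    also have "\<dots> = y \<otimes> inv z"
      using that(2,3) by (simp flip: m_assoc)
    finally show ?thesis .
  qed
  have pow_commute: "z [^] k \<otimes> y = y \<otimes> z [^] k"
    if "z \<otimes> y = y \<otimes> z" "z \<in> carrier G" "y \<in> carrier G" for z y and k :: int
  proof (cases k rule: int_cases)
    case (nonneg n)
    then show ?thesis using that by (simp add: int_pow_int group_commutes_pow)
  next
    case (neg n)
    then show ?thesis
      using that inv_commute group_commutes_pow int_pow_neg_int
      by (metis nat_pow_closed of_nat_Suc)
  qed
  show ?thesis
    using assms pow_commute[of y "x [^] i" j] pow_commute[of x y i] by simp
qed

lemma (in group) generate_mult_closed: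
  assumes "S \<subseteq> carrier G" "T \<subseteq> carrier G"
    and "\<And>g z. g \<in> T \<Longrightarrow> z \<in> S \<Longrightarrow> g \<otimes> z \<in> S \<and> inv g \<otimes> z \<in> S"
    and "h \<in> generate G T" "z \<in> S"
  shows "h \<otimes> z \<in> S"
  using assms(4,5)
proof (induction arbitrary: z)
  case one
  then show ?case using assms(1) by auto
next
  case (eng h1 h2)
  then show ?case
    using assms(1) generate_in_carrier[OF assms(2)] by (simp add: m_assoc subset_iff)
qed (use assms(3) in auto)

lemma (in group) countable_generate:
  assumes "T \<subseteq> carrier G" "countable T"
  shows "countable (generate G T)"
proof -
  define U where "U = T \<union> m_inv G ` T"
  have U: "U \<subseteq> carrier G" using assms(1) by (auto simp: U_def)
  define prod where "prod l = foldr (\<otimes>) l \<one>" for l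
  have prod_closed: "prod l \<in> carrier G" if "l \<in> lists U" for l
    using that U by (induction l) (auto simp: prod_def)
  have prod_append: "prod (l1 @ l2) = prod l1 \<otimes> prod l2" if "l1 \<in> lists U" "l2 \<in> lists U" for l1 l2
    using that
  proof (induction l1)
    case (Cons g l1)
    then show ?case
      using U prod_closed[of l1] prod_closed[of l2] by (auto simp: prod_def m_assoc subset_iff)
  qed (use prod_closed in \<open>simp add: prod_def\<close>)
  have "h \<in> prod ` lists U" if "h \<in> generate G T" for h
    using that
  proof induction
    case one
    show ?case by (rule image_eqI[of _ _ "[]"]) (auto simp: prod_def)
  next
    case (incl h)
    then show ?case using U by (intro image_eqI[of _ _ "[h]"]) (auto simp: prod_def U_def)
  next
    case (inv h)
    then show ?case using U by (intro image_eqI[of _ _ "[inv h]"]) (auto simp: prod_def U_def)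
  next
    case (eng h1 h2)
    then obtain l1 l2 where "l1 \<in> lists U" "l2 \<in> lists U" "h1 = prod l1" "h2 = prod l2"
      by blast
    then show ?case
      using prod_append by (intro image_eqI[of _ _ "l1 @ l2"]) auto
  qed
  moreover have "countable (prod ` lists U)"
    using assms(2) by (simp add: U_def)
  ultimately show ?thesis by (meson countable_subset subsetI)
qed

definition transport_group :: "('a, 'z) monoid_scheme \<Rightarrow> ('a \<Rightarrow> 'b) \<Rightarrow> 'b monoid" where
  "transport_group K f =
     \<lparr>carrier = f ` carrier K,
      monoid.mult = (\<lambda>x y. f (inv_into (carrier K) f x \<otimes>\<^bsub>K\<^esub> inv_into (carrier K) f y)),
      one = f \<one>\<^bsub>K\<^esub>\<rparr>"

lemma (in group) transport_group_iso:
  assumes "inj_on f (carrier G)"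
  shows "f \<in> iso G (transport_group G f)"
  using assms by (auto simp: iso_def hom_def transport_group_def inj_on_imp_bij_betw)

lemma (in group) group_transport_group:
  assumes f: "inj_on f (carrier G)"
  shows "group (transport_group G f)"
proof -
  have "monoid (transport_group G f)"
    using f by unfold_locales (auto simp: transport_group_def m_assoc)
  then show ?thesis
    using iso_imp_group transport_group_iso[OF f] by (auto simp: is_iso_def)
qed

section \<open>Presentations of G(m,n)\<close>

lemma presents_Gmn_group:
  assumes "presents_Gmn G a b m n"
  shows "group G" "a \<in> carrier G" "b \<in> carrier G"
    and "a [^]\<^bsub>G\<^esub> m \<otimes>\<^bsub>G\<^esub> b [^]\<^bsub>G\<^esub> n = b [^]\<^bsub>G\<^esub> n \<otimes>\<^bsub>G\<^esub> a [^]\<^bsub>G\<^esub> m"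
proof -
  show G: "group G" and a: "a \<in> carrier G" and b: "b \<in> carrier G"
    using assms by (auto simp: presents_Gmn_def)
  have "commutator G (a [^]\<^bsub>G\<^esub> m) (b [^]\<^bsub>G\<^esub> n) = \<one>\<^bsub>G\<^esub>"
    using assms by (simp add: presents_Gmn_def)
  then show "a [^]\<^bsub>G\<^esub> m \<otimes>\<^bsub>G\<^esub> b [^]\<^bsub>G\<^esub> n = b [^]\<^bsub>G\<^esub> n \<otimes>\<^bsub>G\<^esub> a [^]\<^bsub>G\<^esub> m"
    using G a b by (simp add: commutator_eq_one_iff group.is_monoid monoid.nat_pow_closed)
qed

lemma commutator_eq_one_sym:
  "group K \<Longrightarrow> x \<in> carrier K \<Longrightarrow> y \<in> carrier K
    \<Longrightarrow> commutator K x y = \<one>\<^bsub>K\<^esub> \<longleftrightarrow> commutator K y x = \<one>\<^bsub>K\<^esub>"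
  using commutator_eq_one_iff[of K x y] commutator_eq_one_iff[of K y x] by auto

lemma presents_Gmn_swap:
  assumes "presents_Gmn G a b m n"
  shows "presents_Gmn G b a n m"
proof -
  from assms have G: "group G" "a \<in> carrier G" "b \<in> carrier G"
    and comm: "commutator G (a [^]\<^bsub>G\<^esub> m) (b [^]\<^bsub>G\<^esub> n) = \<one>\<^bsub>G\<^esub>"
    and gen: "carrier G = generate G {a, b}"
    and univ: "\<And>(K :: nat monoid) a' b'. group K \<Longrightarrow> a' \<in> carrier K \<Longrightarrow> b' \<in> carrier K
      \<Longrightarrow> commutator K (a' [^]\<^bsub>K\<^esub> m) (b' [^]\<^bsub>K\<^esub> n) = \<one>\<^bsub>K\<^esub> \<Longrightarrow> \<exists>h\<in>hom G K. h a = a' \<and> h b = b'"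
    unfolding presents_Gmn_def by blast+
  show ?thesis
    unfolding presents_Gmn_def
  proof (intro conjI allI impI)
    show "group G" "b \<in> carrier G" "a \<in> carrier G" by (fact G)+
    show "commutator G (b [^]\<^bsub>G\<^esub> n) (a [^]\<^bsub>G\<^esub> m) = \<one>\<^bsub>G\<^esub>"
      using comm G by (simp add: commutator_eq_one_sym group.is_monoid monoid.nat_pow_closed)
    show "carrier G = generate G {b, a}"
      using gen by (simp add: insert_commute)
    fix K :: "nat monoid" and a' b'
    assume "group K \<and> a' \<in> carrier K \<and> b' \<in> carrier K
      \<and> commutator K (a' [^]\<^bsub>K\<^esub> n) (b' [^]\<^bsub>K\<^esub> m) = \<one>\<^bsub>K\<^esub>"
    then show "\<exists>h\<in>hom G K. h b = a' \<and> h a = b'"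
      using univ[of K b' a'] by (auto simp: commutator_eq_one_sym group.is_monoid monoid.nat_pow_closed)
  qed
qed

text \<open>The universal property in the definition only quantifies over groups carried by
  subsets of the naturals; it extends to all groups because the subgroup generated by two
  elements is countable.\<close>

lemma presents_Gmn_hom:
  fixes K :: "('k, 'z) monoid_scheme"
  assumes P: "presents_Gmn G a b m n" and K: "group K" "a' \<in> carrier K" "b' \<in> carrier K"
    and comm: "a' [^]\<^bsub>K\<^esub> m \<otimes>\<^bsub>K\<^esub> b' [^]\<^bsub>K\<^esub> n = b' [^]\<^bsub>K\<^esub> n \<otimes>\<^bsub>K\<^esub> a' [^]\<^bsub>K\<^esub> m"
  shows "\<exists>h \<in> hom G K. h a = a' \<and> h b = b'"
proof -
  interpret K: group K by fact
  define S where "S = subgroup_generated K {a', b'}"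
  have S: "group S" unfolding S_def by simp
  interpret S: group S by fact
  have carrier_S: "carrier S = generate K {a', b'}"
    using K by (auto simp: S_def carrier_subgroup_generated)
  have ab_S: "a' \<in> carrier S" "b' \<in> carrier S"
    by (auto simp: carrier_S intro: generate.incl)
  have "countable (carrier S)"
    using K by (simp add: carrier_S K.countable_generate)
  then obtain f :: "'k \<Rightarrow> nat" where f: "inj_on f (carrier S)"
    by (auto simp: countable_def)
  define T where "T = transport_group S f"
  have T: "group T" and f_iso: "f \<in> iso S T"
    using f by (simp_all add: T_def S.group_transport_group S.transport_group_iso)
  have f_hom: "f \<in> hom S T" using f_iso by (simp add: iso_def)
  have pow_S: "x [^]\<^bsub>K\<^esub> k = x [^]\<^bsub>S\<^esub> k" for x and k :: nat
    by (simp add: S_def pow_subgroup_generated)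
  have f_mult: "f x \<otimes>\<^bsub>T\<^esub> f y = f (x \<otimes>\<^bsub>K\<^esub> y)" if "x \<in> carrier S" "y \<in> carrier S" for x y
    using hom_mult[OF f_hom that] by (simp add: S_def)
  have f_pow: "f x [^]\<^bsub>T\<^esub> k = f (x [^]\<^bsub>K\<^esub> k)" if "x \<in> carrier S" for x and k :: nat
    using hom_nat_pow[OF f_hom that S T] by (simp add: pow_S)
  have "f a' [^]\<^bsub>T\<^esub> m \<otimes>\<^bsub>T\<^esub> f b' [^]\<^bsub>T\<^esub> n = f b' [^]\<^bsub>T\<^esub> n \<otimes>\<^bsub>T\<^esub> f a' [^]\<^bsub>T\<^esub> m"
    using comm ab_S by (simp add: f_pow f_mult pow_S)
  then have "commutator T (f a' [^]\<^bsub>T\<^esub> m) (f b' [^]\<^bsub>T\<^esub> n) = \<one>\<^bsub>T\<^esub>"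
    using T ab_S f_hom by (simp add: commutator_eq_one_iff group.is_monoid monoid.nat_pow_closed hom_in_carrier)
  then obtain h where h: "h \<in> hom G T" "h a = f a'" "h b = f b'"
    using P T ab_S f_hom unfolding presents_Gmn_def T_def by (metis hom_in_carrier)
  define g where "g = inv_into (carrier S) f"
  have "g \<circ> h \<in> hom G S"
    using hom_compose[OF h(1)] S.iso_set_sym[OF f_iso] by (auto simp: g_def iso_def)
  moreover have "carrier S \<subseteq> carrier K"
    using K by (simp add: carrier_S K.generate_incl)
  ultimately have "g \<circ> h \<in> hom G K"
    by (auto simp: hom_def S_def)
  moreover have "(g \<circ> h) a = a'" "(g \<circ> h) b = b'"
    using h f ab_S by (simp_all add: g_def)
  ultimately show ?thesis by blast
qed

section \<open>Free products of two cyclic groups\<close>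

text \<open>A word is a list of syllables (s, e), standing for the e-th power of generator s. It is
  reduced for the free product Z/(M True) * Z/(M False) (where Z/0 = Z) if its exponents are
  nonzero residues modulo M s and consecutive syllables use different generators. On reduced
  words, free_lmult M s i computes the reduced form of left multiplication by s^i.\<close>

type_synonym syllable = "bool \<times> int"

fun reduced :: "(bool \<Rightarrow> nat) \<Rightarrow> syllable list \<Rightarrow> bool" where
  "reduced M [] \<longleftrightarrow> True"
| "reduced M ((s, e) # w) \<longleftrightarrow>
     e \<noteq> 0 \<and> e mod int (M s) = e \<and> reduced M w \<and> (w = [] \<or> fst (hd w) \<noteq> s)"

fun head_exp :: "bool \<Rightarrow> syllable list \<Rightarrow> int" where
  "head_exp s [] = 0"
| "head_exp s ((t, e) # w) = (if t = s then e else 0)"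

fun strip_head :: "bool \<Rightarrow> syllable list \<Rightarrow> syllable list" where
  "strip_head s [] = []"
| "strip_head s ((t, e) # w) = (if t = s then w else (t, e) # w)"

definition cons_syllable :: "bool \<Rightarrow> int \<Rightarrow> syllable list \<Rightarrow> syllable list" where
  "cons_syllable s e w = (if e = 0 then w else (s, e) # w)"

definition free_lmult :: "(bool \<Rightarrow> nat) \<Rightarrow> bool \<Rightarrow> int \<Rightarrow> syllable list \<Rightarrow> syllable list" where
  "free_lmult M s i w = cons_syllable s ((head_exp s w + i) mod int (M s)) (strip_head s w)"

lemma head_strip_other:
  "w = [] \<or> fst (hd w) \<noteq> s \<Longrightarrow> head_exp s w = 0 \<and> strip_head s w = w"
  by (cases w) auto

lemma reduced_strip_head:
  "reduced M w \<Longrightarrow> reduced M (strip_head s w) \<and> (strip_head s w = [] \<or> fst (hd (strip_head s w)) \<noteq> s)"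
  by (cases "(s, w)" rule: strip_head.cases) auto

lemma head_strip_cons_syllable:
  "w = [] \<or> fst (hd w) \<noteq> s \<Longrightarrow> head_exp s (cons_syllable s e w) = e \<and> strip_head s (cons_syllable s e w) = w"
  by (auto simp: cons_syllable_def head_strip_other)

lemma cons_head_strip:
  "reduced M w \<Longrightarrow> cons_syllable s (head_exp s w) (strip_head s w) = w"
  by (cases "(s, w)" rule: strip_head.cases) (auto simp: cons_syllable_def)

lemma head_exp_mod: "reduced M w \<Longrightarrow> head_exp s w mod int (M s) = head_exp s w"
  by (cases "(s, w)" rule: strip_head.cases) auto

lemma reduced_free_lmult: "reduced M w \<Longrightarrow> reduced M (free_lmult M s i w)"
  using reduced_strip_head[of M w s] by (auto simp: free_lmult_def cons_syllable_def)

lemma free_lmult_add: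
  "reduced M w \<Longrightarrow> free_lmult M s i (free_lmult M s j w) = free_lmult M s (i + j) w"
  using reduced_strip_head[of M w s]
  by (simp add: free_lmult_def head_strip_cons_syllable mod_simps ac_simps)

lemma free_lmult_0: "reduced M w \<Longrightarrow> free_lmult M s 0 w = w"
  by (simp add: free_lmult_def head_exp_mod cons_head_strip)

lemma free_lmult_period: "reduced M w \<Longrightarrow> free_lmult M s (int (M s)) w = w"
  by (simp add: free_lmult_def head_exp_mod cons_head_strip)

lemma free_lmult_Cons: "reduced M ((s, e) # w) \<Longrightarrow> free_lmult M s e w = (s, e) # w"
  by (simp add: free_lmult_def head_strip_other cons_syllable_def)

lemma free_lmult_append:
  "w \<noteq> [] \<Longrightarrow> free_lmult M s i (w @ u) = free_lmult M s i w @ u"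
  by (cases "(s, w)" rule: strip_head.cases) (auto simp: free_lmult_def cons_syllable_def)

lemma last_free_lmult:
  assumes "w \<noteq> []" "fst (last w) \<noteq> s"
  shows "free_lmult M s i w \<noteq> [] \<and> last (free_lmult M s i w) = last w"
proof -
  have "strip_head s w \<noteq> [] \<and> last (strip_head s w) = last w"
    using assms by (cases "(s, w)" rule: strip_head.cases) auto
  then show ?thesis by (simp add: free_lmult_def cons_syllable_def)
qed

lemma free_lmult_inj:
  assumes "free_lmult M s i w = free_lmult M s j w"
  shows "i mod int (M s) = j mod int (M s)"
proof -
  have "(head_exp s w + i) mod int (M s) = (head_exp s w + j) mod int (M s)"
    using assms arg_cong[OF assms, of length]
    by (auto simp: free_lmult_def cons_syllable_def split: if_splits)
  then show ?thesis
    using mod_diff_cong[of _ _ _ "head_exp s w" "head_exp s w"] by fastforce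
qed

lemma free_lmult_snoc_inj:
  assumes "w \<noteq> []" "fst (last w) \<noteq> s"
    and "free_lmult M s p (w @ cons_syllable s q []) = free_lmult M s p' (w @ cons_syllable s q' [])"
  shows "p mod int (M s) = p' mod int (M s) \<and> q = q'"
proof -
  define L where "L i = free_lmult M s i w" for i
  have L: "L i \<noteq> [] \<and> fst (last (L i)) \<noteq> s" for i
    using last_free_lmult[OF assms(1,2)] assms(2) by (simp add: L_def)
  have "L p @ cons_syllable s q [] = L p' @ cons_syllable s q' []"
    using assms(3) by (simp add: L_def free_lmult_append[OF assms(1)])
  moreover have "q = 0 \<longleftrightarrow> q' = 0"
    using L[of p] L[of p'] arg_cong[OF calculation, of "\<lambda>v. fst (last v)"]
    by (auto simp: cons_syllable_def split: if_splits)
  ultimately have "L p = L p' \<and> q = q'"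
    by (auto simp: cons_syllable_def split: if_splits)
  then show ?thesis by (auto simp: L_def intro: free_lmult_inj)
qed

lemma foldr_free_lmult_reduced:
  "reduced M (w @ u) \<Longrightarrow> foldr (\<lambda>(s, e). free_lmult M s e) w u = w @ u"
proof (induction w)
  case (Cons x w)
  then show ?case by (cases x) (simp add: free_lmult_Cons)
qed simp

lemma reduced_appendD: "reduced M (v @ u) \<Longrightarrow> reduced M v"
  by (induction v rule: reduced.induct) (auto simp: hd_append split: if_splits)

lemma reduced_snoc:
  assumes "reduced M v" "v = [] \<or> fst (last v) \<noteq> s" "e \<noteq> 0" "e mod int (M s) = e"
  shows "reduced M (v @ [(s, e)])"
  using assms by (induction v rule: reduced.induct) (auto simp: hd_append)

lemma reduced_exp_nonzero: "reduced M w \<Longrightarrow> (s, e) \<in> set w \<Longrightarrow> e \<noteq> 0"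
  by (induction w rule: reduced.induct) auto

lemma reduced_alternates: "reduced M (v @ [x, y]) \<Longrightarrow> fst x \<noteq> fst y"
proof (induction v)
  case Nil
  then show ?case by (cases x; cases y) auto
next
  case (Cons z v)
  then show ?case by (cases z) auto
qed

lemma reduced_split_last:
  assumes "reduced M w" "(s, e) \<in> set w"
  obtains v j where "w = v @ cons_syllable (\<not> s) j []" "v \<noteq> []" "fst (last v) = s"
proof (cases "fst (last w) = s")
  case True
  moreover have "w \<noteq> []" using assms(2) by auto
  ultimately show ?thesis using that[of w 0] by (simp add: cons_syllable_def)
next
  case False
  have "w \<noteq> []" using assms(2) by auto
  have "last w = (\<not> s, snd (last w))" using False by (cases "last w") auto
  then obtain v j where w: "w = v @ [(\<not> s, j)]"
    using append_butlast_last_id[OF \<open>w \<noteq> []\<close>] by metis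
  have "j \<noteq> 0" using reduced_exp_nonzero[OF assms(1)] w by auto
  have "v \<noteq> []" using assms(2) w by auto
  then obtain u x where "v = u @ [x]" by (cases v rule: rev_cases) auto
  then have "fst (last v) = s" using reduced_alternates[of M u x "(\<not> s, j)"] assms(1) w by auto
  then show ?thesis using that[of v j] w \<open>j \<noteq> 0\<close> \<open>v \<noteq> []\<close> by (simp add: cons_syllable_def)
qed

definition scale_exps :: "(bool \<Rightarrow> int) \<Rightarrow> syllable list \<Rightarrow> syllable list" where
  "scale_exps \<kappa> w = map (\<lambda>x. (fst x, \<kappa> (fst x) * snd x)) w"

lemma reduced_scale_exps:
  assumes "reduced M w" "\<And>s. \<kappa> s \<noteq> 0" "\<And>s. \<kappa> s = 1 \<or> M s = 0"
  shows "reduced M (scale_exps \<kappa> w)"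
  using assms(1)
proof (induction w)
  case (Cons x w)
  obtain s e where x: "x = (s, e)" by (cases x)
  have "\<kappa> s * e mod int (M s) = \<kappa> s * e"
    using assms(3)[of s] Cons.prems x by auto
  then show ?case
    using Cons assms(2)[of s] x by (auto simp: scale_exps_def hd_map)
qed (simp add: scale_exps_def)

lemma last_scale_exps: "v \<noteq> [] \<Longrightarrow> fst (last (scale_exps \<kappa> v)) = fst (last v)"
  by (simp add: scale_exps_def last_map)

definition reduced_words :: "(bool \<Rightarrow> nat) \<Rightarrow> syllable list set" where
  "reduced_words M = {w. reduced M w}"

definition free_perm :: "(bool \<Rightarrow> nat) \<Rightarrow> bool \<Rightarrow> int \<Rightarrow> syllable list \<Rightarrow> syllable list" where
  "free_perm M s i = restrict (free_lmult M s i) (reduced_words M)"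

lemma free_perm_Bij: "free_perm M s i \<in> Bij (reduced_words M)"
proof -
  have "bij_betw (free_perm M s i) (reduced_words M) (reduced_words M)"
    by (rule bij_betw_byWitness[where f' = "free_perm M s (- i)"])
      (auto simp: free_perm_def reduced_words_def reduced_free_lmult free_lmult_add free_lmult_0)
  then show ?thesis by (simp add: Bij_def free_perm_def)
qed

lemma free_perm_add:
  "free_perm M s i \<otimes>\<^bsub>BijGroup (reduced_words M)\<^esub> free_perm M s j = free_perm M s (i + j)"
  using free_perm_Bij[of M s]
  by (auto simp: BijGroup_def compose_def free_perm_def reduced_words_def
      reduced_free_lmult free_lmult_add)

lemma free_perm_hom: "free_perm M s \<in> hom integer_group (BijGroup (reduced_words M))"
  by (rule homI) (simp_all add: BijGroup_def free_perm_Bij flip: free_perm_add)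

lemma free_perm_int_pow:
  "free_perm M s i [^]\<^bsub>BijGroup (reduced_words M)\<^esub> k = free_perm M s (k * i)"
  using hom_int_pow[OF free_perm_hom[of M s], of i k] by (simp add: group_BijGroup)

lemma free_perm_period: "free_perm M s (int (M s)) = \<one>\<^bsub>BijGroup (reduced_words M)\<^esub>"
  by (auto simp: BijGroup_def free_perm_def reduced_words_def free_lmult_period)

lemma BijGroup_mult_apply:
  "f \<in> Bij S \<Longrightarrow> g \<in> Bij S \<Longrightarrow> x \<in> S \<Longrightarrow> (f \<otimes>\<^bsub>BijGroup S\<^esub> g) x = f (g x)"
  by (simp add: BijGroup_def compose_def)

section \<open>Evaluating words in a group\<close>

definition word_eval :: "('a, 'z) monoid_scheme \<Rightarrow> (bool \<Rightarrow> 'a) \<Rightarrow> syllable list \<Rightarrow> 'a" where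
  "word_eval K g w = foldr (\<lambda>(s, e) x. g s [^]\<^bsub>K\<^esub> e \<otimes>\<^bsub>K\<^esub> x) w \<one>\<^bsub>K\<^esub>"

lemma word_eval_Nil [simp]: "word_eval K g [] = \<one>\<^bsub>K\<^esub>"
  and word_eval_Cons [simp]: "word_eval K g ((s, e) # w) = g s [^]\<^bsub>K\<^esub> e \<otimes>\<^bsub>K\<^esub> word_eval K g w"
  by (simp_all add: word_eval_def)

context group
begin

lemma word_eval_closed [simp]: "(\<And>s. g s \<in> carrier G) \<Longrightarrow> word_eval G g w \<in> carrier G"
  by (induction w) auto

lemma word_eval_cons_syllable:
  "(\<And>s. g s \<in> carrier G) \<Longrightarrow> word_eval G g (cons_syllable s e w) = g s [^] e \<otimes> word_eval G g w"
  by (simp add: cons_syllable_def)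

lemma word_eval_append:
  "(\<And>s. g s \<in> carrier G) \<Longrightarrow> word_eval G g (v @ u) = word_eval G g v \<otimes> word_eval G g u"
  by (induction v) (auto simp: m_assoc)

lemma word_eval_free_lmult:
  assumes "reduced M w" "\<And>s. g s \<in> carrier G"
  shows "g s [^] i \<otimes> word_eval G g w
    = (g s [^] M s) [^] ((head_exp s w + i) div int (M s)) \<otimes> word_eval G g (free_lmult M s i w)"
proof -
  define q r where "q = (head_exp s w + i) div int (M s)" and "r = (head_exp s w + i) mod int (M s)"
  define u where "u = word_eval G g (strip_head s w)"
  have u: "u \<in> carrier G" using assms(2) by (simp add: u_def)
  have "word_eval G g w = word_eval G g (cons_syllable s (head_exp s w) (strip_head s w))"
    by (simp add: cons_head_strip[OF assms(1)])
  then have "g s [^] i \<otimes> word_eval G g w = g s [^] i \<otimes> (g s [^] head_exp s w \<otimes> u)"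
    by (simp add: u_def word_eval_cons_syllable[OF assms(2)])
  also have "\<dots> = g s [^] (int (M s) * q + r) \<otimes> u"
    using assms(2) u by (simp add: q_def r_def int_pow_mult m_assoc add.commute)
  also have "\<dots> = (g s [^] M s) [^] q \<otimes> (g s [^] r \<otimes> u)"
    using assms(2) u by (simp add: int_pow_mult int_pow_pow m_assoc flip: int_pow_int)
  also have "g s [^] r \<otimes> u = word_eval G g (free_lmult M s i w)"
    by (simp add: free_lmult_def r_def u_def word_eval_cons_syllable[OF assms(2)])
  finally show ?thesis by (simp add: q_def)
qed

end

lemma hom_word_eval:
  assumes "h \<in> hom G K" "group G" "group K" "\<And>s. g s \<in> carrier G"
  shows "h (word_eval G g w) = word_eval K (h \<circ> g) w"
proof (induction w)
  case (Cons x w)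
  have "g (fst x) [^]\<^bsub>G\<^esub> snd x \<in> carrier G" "word_eval G g w \<in> carrier G"
    using assms(2,4) by (simp_all add: group.int_pow_closed group.word_eval_closed)
  then show ?case
    using Cons assms by (cases x) (simp add: hom_mult hom_int_pow)
qed (simp add: hom_one assms)

lemma word_eval_free_perm:
  assumes "u \<in> reduced_words M"
  shows "word_eval (BijGroup (reduced_words M)) (\<lambda>s. free_perm M s (\<kappa> s)) w u
    = foldr (\<lambda>(s, e). free_lmult M s e) (scale_exps \<kappa> w) u"
proof (induction w)
  case Nil
  then show ?case using assms by (simp add: BijGroup_def scale_exps_def)
next
  case (Cons x w)
  obtain s e where x: "x = (s, e)" by (cases x)
  define E where "E = word_eval (BijGroup (reduced_words M)) (\<lambda>s. free_perm M s (\<kappa> s)) w"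
  have "E \<in> carrier (BijGroup (reduced_words M))"
    unfolding E_def by (rule group.word_eval_closed[OF group_BijGroup]) (simp add: BijGroup_def free_perm_Bij)
  then have E: "E \<in> Bij (reduced_words M)" by (simp add: BijGroup_def)
  then have "E u \<in> reduced_words M"
    using assms by (auto simp: Bij_def bij_betw_def)
  then have "(free_perm M s (e * \<kappa> s) \<otimes>\<^bsub>BijGroup (reduced_words M)\<^esub> E) u
      = free_lmult M s (\<kappa> s * e) (E u)"
    unfolding BijGroup_mult_apply[OF free_perm_Bij E assms] by (simp add: free_perm_def mult.commute)
  then show ?case
    using Cons by (simp add: x E_def free_perm_int_pow scale_exps_def)
qed

section \<open>Double cosets of H in G(m,n)\<close>

locale Gmn_presentation =
  fixes G :: "'g monoid" (structure) and a b :: 'g and m n :: nat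
  assumes presents: "presents_Gmn G a b m n" and m_pos: "0 < m" and n_pos: "0 < n"
begin

sublocale group G
  by (rule presents_Gmn_group(1)[OF presents])

lemma a_closed [simp]: "a \<in> carrier G" and b_closed [simp]: "b \<in> carrier G"
  using presents_Gmn_group[OF presents] by auto

abbreviation c where "c \<equiv> a [^] m"
abbreviation d where "d \<equiv> b [^] n"

text \<open>Modulo the subgroup generated by c, which is central in A, the subgroup A is the free
  product of the cyclic groups generated by a (of order m) and d (infinite); its elements are
  written with reduced words of Z/m * Z in the generators gen True = a and gen False = d.\<close>

definition gen :: "bool \<Rightarrow> 'g" where "gen s = (if s then a else d)"

abbreviation moduli :: "bool \<Rightarrow> nat" where "moduli s \<equiv> if s then m else 0"

lemma gen_closed [simp]: "gen s \<in> carrier G"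
  by (simp add: gen_def)

lemma H_carrier: "generate G {c, d} \<subseteq> carrier G"
  by (rule generate_incl) auto

lemma A_carrier: "generate G (insert a (generate G {c, d})) \<subseteq> carrier G"
  using H_carrier by (intro generate_incl) auto

lemma c_commute_gen_pow: "c [^] (k::int) \<otimes> gen s [^] (i::int) = gen s [^] i \<otimes> c [^] k"
proof -
  have "c \<otimes> gen s = gen s \<otimes> c"
    using presents_Gmn_group(4)[OF presents] nat_pow_mult[of a m 1] nat_pow_mult[of a 1 m]
    by (auto simp: gen_def add.commute)
  then show ?thesis by (simp add: int_pow_commute)
qed

definition normal_forms :: "'g set" where
  "normal_forms = {c [^] k \<otimes> word_eval G gen w | (k::int) w. reduced moduli w}"

lemma normal_forms_carrier: "normal_forms \<subseteq> carrier G"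
  by (auto simp: normal_forms_def)

lemma gen_pow_mult_normal_forms:
  assumes "z \<in> normal_forms"
  shows "gen s [^] (i::int) \<otimes> z \<in> normal_forms"
proof -
  obtain k :: int and w where z: "z = c [^] k \<otimes> word_eval G gen w" "reduced moduli w"
    using assms unfolding normal_forms_def by blast
  define q where "q = (head_exp s w + i) div int (moduli s)"
  have "gen s [^] i \<otimes> z = c [^] k \<otimes> (gen s [^] i \<otimes> word_eval G gen w)"
    using z(1) by (simp add: m_assoc c_commute_gen_pow flip: m_assoc)
  also have "\<dots> = c [^] k \<otimes> ((gen s [^] moduli s) [^] q \<otimes> word_eval G gen (free_lmult moduli s i w))"
    by (simp add: word_eval_free_lmult[OF z(2)] q_def)
  also have "(gen s [^] moduli s) [^] q = c [^] (if s then q else 0)"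
    by (simp add: gen_def)
  finally have "gen s [^] i \<otimes> z
      = c [^] (k + (if s then q else 0)) \<otimes> word_eval G gen (free_lmult moduli s i w)"
    by (simp add: int_pow_mult m_assoc)
  then show ?thesis
    using reduced_free_lmult[OF z(2)] by (auto simp: normal_forms_def)
qed

lemma c_pow_mult_normal_forms:
  assumes "z \<in> normal_forms"
  shows "c [^] (i::int) \<otimes> z \<in> normal_forms"
proof -
  obtain k :: int and w where "z = c [^] k \<otimes> word_eval G gen w" "reduced moduli w"
    using assms unfolding normal_forms_def by blast
  then have "c [^] i \<otimes> z = c [^] (i + k) \<otimes> word_eval G gen w \<and> reduced moduli w"
    by (simp add: int_pow_mult m_assoc)
  then show ?thesis by (auto simp: normal_forms_def)
qed

lemma H_mult_normal_forms:
  assumes "h \<in> generate G {c, d}" "z \<in> normal_forms"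
  shows "h \<otimes> z \<in> normal_forms"
proof (rule generate_mult_closed[OF normal_forms_carrier _ _ assms])
  fix g z assume "g \<in> {c, d}" "z \<in> normal_forms"
  then show "g \<otimes> z \<in> normal_forms \<and> inv g \<otimes> z \<in> normal_forms"
    using c_pow_mult_normal_forms[of z 1] c_pow_mult_normal_forms[of z "-1"]
      gen_pow_mult_normal_forms[of z False 1] gen_pow_mult_normal_forms[of z False "-1"]
    by (auto simp: int_pow_neg gen_def)
qed auto

lemma A_normal_form:
  assumes "y \<in> generate G (insert a (generate G {c, d}))"
  obtains k w where "reduced moduli w" "y = c [^] (k::int) \<otimes> word_eval G gen w"
proof -
  have "\<one> \<in> normal_forms"
    by (auto simp: normal_forms_def intro!: exI[of _ "0::int"] exI[of _ "[]"])
  moreover have "inv h \<in> generate G {c, d}" if "h \<in> generate G {c, d}" for h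
    using that by (simp add: generate_m_inv_closed)
  ultimately have "y \<otimes> \<one> \<in> normal_forms"
    using gen_pow_mult_normal_forms[of _ True 1] gen_pow_mult_normal_forms[of _ True "-1"]
      H_mult_normal_forms
    by (intro generate_mult_closed[OF normal_forms_carrier _ _ assms])
      (use H_carrier in \<open>auto simp: int_pow_neg gen_def\<close>)
  moreover have "y \<in> carrier G"
    using assms A_carrier by blast
  ultimately show ?thesis
    using that by (auto simp: normal_forms_def)
qed

lemma word_eval_in_H:
  "(\<And>x. x \<in> set w \<Longrightarrow> \<not> fst x) \<Longrightarrow> word_eval G gen w \<in> generate G {c, d}"
proof (induction w)
  case Nil
  then show ?case by (simp add: generate.one)
next
  case (Cons x w)
  have sub: "subgroup (generate G {c, d}) G" by (simp add: generate_is_subgroup)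
  obtain e where x: "x = (False, e)"
    using Cons.prems[of x] by (cases x) auto
  have "d [^] e \<in> generate G {c, d}"
    by (rule subgroup_int_pow_closed[OF sub]) (simp add: generate.incl)
  then show ?case
    using Cons subgroup.m_closed[OF sub] by (simp add: x gen_def)
qed

definition free_rep :: "'g \<Rightarrow> syllable list \<Rightarrow> syllable list" where
  "free_rep = (SOME h. h \<in> hom G (BijGroup (reduced_words moduli))
                 \<and> h a = free_perm moduli True 1 \<and> h b = free_perm moduli False 1)"

lemma free_rep: "free_rep \<in> hom G (BijGroup (reduced_words moduli))"
  "free_rep a = free_perm moduli True 1" "free_rep b = free_perm moduli False 1"
proof -
  let ?Q = "BijGroup (reduced_words moduli)"
  interpret Q: group ?Q by (rule group_BijGroup)
  have carrier: "free_perm moduli s i \<in> carrier ?Q" for s i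
    by (simp add: BijGroup_def free_perm_Bij)
  have "free_perm moduli True 1 [^]\<^bsub>?Q\<^esub> m = \<one>\<^bsub>?Q\<^esub>"
    using free_perm_int_pow[of moduli True 1 "int m"] free_perm_period[of moduli True]
    by (simp add: int_pow_int)
  then have "\<exists>h \<in> hom G ?Q. h a = free_perm moduli True 1 \<and> h b = free_perm moduli False 1"
    using carrier by (intro presents_Gmn_hom[OF presents group_BijGroup]) simp_all
  then have "\<exists>h. h \<in> hom G ?Q \<and> h a = free_perm moduli True 1 \<and> h b = free_perm moduli False 1"
    by blast
  then have "free_rep \<in> hom G ?Q \<and> free_rep a = free_perm moduli True 1 \<and> free_rep b = free_perm moduli False 1"
    unfolding free_rep_def by (rule someI_ex)
  then show "free_rep \<in> hom G ?Q" "free_rep a = free_perm moduli True 1" "free_rep b = free_perm moduli False 1"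
    by simp_all
qed

lemma free_rep_Bij: "x \<in> carrier G \<Longrightarrow> free_rep x \<in> Bij (reduced_words moduli)"
  using hom_in_carrier[OF free_rep(1)] by (simp add: BijGroup_def)

lemma free_rep_maps:
  "x \<in> carrier G \<Longrightarrow> u \<in> reduced_words moduli \<Longrightarrow> free_rep x u \<in> reduced_words moduli"
  using free_rep_Bij by (auto simp: Bij_def bij_betw_def)

lemma free_rep_mult_apply:
  "x \<in> carrier G \<Longrightarrow> y \<in> carrier G \<Longrightarrow> u \<in> reduced_words moduli
    \<Longrightarrow> free_rep (x \<otimes> y) u = free_rep x (free_rep y u)"
  by (simp add: hom_mult[OF free_rep(1)] BijGroup_mult_apply free_rep_Bij)

lemma free_rep_c_pow:
  assumes "u \<in> reduced_words moduli"
  shows "free_rep (c [^] (k::int)) u = u"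
proof -
  have "free_rep c = free_perm moduli True (int m * 1)"
    using hom_nat_pow[OF free_rep(1)] free_perm_int_pow[of moduli True 1 "int m"]
    by (simp add: free_rep(2) group_BijGroup int_pow_int)
  then have "free_rep c = \<one>\<^bsub>BijGroup (reduced_words moduli)\<^esub>"
    using free_perm_period[of moduli True] by simp
  moreover have "free_rep (c [^] k) = free_rep c [^]\<^bsub>BijGroup (reduced_words moduli)\<^esub> k"
    by (rule hom_int_pow[OF free_rep(1)]) (simp_all add: group_BijGroup)
  ultimately have "free_rep (c [^] k) = \<one>\<^bsub>BijGroup (reduced_words moduli)\<^esub>"
    by (simp add: group.int_pow_one[OF group_BijGroup])
  then show ?thesis
    using assms by (simp add: BijGroup_def)
qed

lemma free_rep_d: "free_rep d = free_perm moduli False (int n)"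
  using hom_nat_pow[OF free_rep(1)] free_perm_int_pow[of moduli False 1 "int n"]
  by (simp add: free_rep(3) group_BijGroup int_pow_int)

lemma free_rep_d_pow:
  "u \<in> reduced_words moduli \<Longrightarrow> free_rep (d [^] (k::int)) u = free_lmult moduli False (int n * k) u"
  using hom_int_pow[OF free_rep(1)] free_perm_int_pow[of moduli False "int n" k]
  by (simp add: free_rep_d group_BijGroup free_perm_def mult.commute)

lemma free_rep_word_eval:
  assumes "u \<in> reduced_words moduli"
  shows "free_rep (word_eval G gen w) u
    = foldr (\<lambda>(s, e). free_lmult moduli s e) (scale_exps (\<lambda>s. if s then 1 else int n) w) u"
proof -
  have "free_rep \<circ> gen = (\<lambda>s. free_perm moduli s (if s then 1 else int n))"
    by (auto simp: gen_def free_rep(2) free_rep_d)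
  then show ?thesis
    using hom_word_eval[OF free_rep(1) is_group group_BijGroup gen_closed] word_eval_free_perm[OF assms]
    by simp
qed

lemma c_exponent_sum_unique:
  fixes \<alpha> \<beta> \<gamma> \<delta> \<alpha>' \<beta>' \<gamma>' \<delta>' :: int
  assumes "y \<in> carrier G"
    and "c [^] \<alpha> \<otimes> d [^] \<beta> \<otimes> y \<otimes> c [^] \<gamma> \<otimes> d [^] \<delta> = c [^] \<alpha>' \<otimes> d [^] \<beta>' \<otimes> y \<otimes> c [^] \<gamma>' \<otimes> d [^] \<delta>'"
  shows "\<alpha> + \<gamma> = \<alpha>' + \<gamma>'"
proof -
  obtain \<phi> where \<phi>: "\<phi> \<in> hom G integer_group" "\<phi> a = 1" "\<phi> b = 0"
    using presents_Gmn_hom[OF presents group_integer_group, of 1 0] by auto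
  have \<phi>_val: "\<phi> (c [^] p \<otimes> d [^] q \<otimes> y \<otimes> c [^] r \<otimes> d [^] t) = int m * (p + r) + \<phi> y"
    for p q r t :: int
    using \<phi> assms(1) by (simp add: hom_mult hom_int_pow hom_nat_pow algebra_simps)
  have "int m * (\<alpha> + \<gamma>) + \<phi> y = int m * (\<alpha>' + \<gamma>') + \<phi> y"
    using arg_cong[OF assms(2), of \<phi>] by (simp only: \<phi>_val)
  then show ?thesis using m_pos by simp
qed

lemma A_minus_H_normal_form:
  assumes "y \<in> generate G (insert a (generate G {c, d}))" "y \<notin> generate G {c, d}"
  obtains k j :: int and v where "reduced moduli v" "v \<noteq> []" "fst (last v)"
    and "y = c [^] k \<otimes> word_eval G gen v \<otimes> d [^] j"
proof -
  obtain k :: int and w where w: "reduced moduli w" "y = c [^] k \<otimes> word_eval G gen w"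
    using A_normal_form[OF assms(1)] .
  have "\<exists>e. (True, e) \<in> set w"
  proof (rule ccontr)
    assume "\<nexists>e. (True, e) \<in> set w"
    then have "word_eval G gen w \<in> generate G {c, d}"
      by (intro word_eval_in_H) (metis prod.collapse)
    moreover have "c [^] k \<in> generate G {c, d}"
      by (intro subgroup_int_pow_closed generate_is_subgroup) (auto intro: generate.incl)
    ultimately show False
      using assms(2) w(2) generate_is_subgroup[of "{c, d}"] subgroup.m_closed by fastforce
  qed
  then obtain v j where v: "w = v @ cons_syllable False j []" "v \<noteq> []" "fst (last v)"
    using reduced_split_last[OF w(1)] by (metis (full_types))
  moreover have "y = c [^] k \<otimes> word_eval G gen v \<otimes> d [^] j"
    using w(2) v(1) by (simp add: word_eval_append word_eval_cons_syllable gen_def m_assoc)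
  ultimately show ?thesis
    using that reduced_appendD w(1) by blast
qed

lemma free_rep_word_eval_snoc:
  assumes "reduced moduli v" "v \<noteq> []" "fst (last v)"
  defines "v' \<equiv> scale_exps (\<lambda>s. if s then 1 else int n) v"
  shows "v' @ cons_syllable False r [] \<in> reduced_words moduli"
    and "free_rep (word_eval G gen v) (cons_syllable False r []) = v' @ cons_syllable False r []"
proof -
  have "reduced moduli v'"
    unfolding v'_def using n_pos assms(1) by (intro reduced_scale_exps) auto
  then have snoc: "reduced moduli (v' @ cons_syllable False r [])"
    using assms(2,3) last_scale_exps by (auto simp: v'_def cons_syllable_def intro: reduced_snoc)
  then show "v' @ cons_syllable False r [] \<in> reduced_words moduli"
    by (simp add: reduced_words_def)
  have "cons_syllable False r [] \<in> reduced_words moduli"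
    by (simp add: reduced_words_def cons_syllable_def)
  then have "free_rep (word_eval G gen v) (cons_syllable False r [])
      = foldr (\<lambda>(s, e). free_lmult moduli s e) v' (cons_syllable False r [])"
    by (simp only: free_rep_word_eval v'_def)
  also have "\<dots> = v' @ cons_syllable False r []"
    by (rule foldr_free_lmult_reduced[OF snoc])
  finally show "free_rep (word_eval G gen v) (cons_syllable False r []) = v' @ cons_syllable False r []" .
qed

text \<open>Acting on the empty word, c^p d^q y c^r d^u produces the reduced form of
  t^(n q) v' t^(n (j + u)) in Z/m * Z, where t generates Z; since v' ends with a power of a,
  this word determines n q and n (j + u).\<close>

lemma d_exponents_unique:
  fixes \<alpha> \<beta> \<gamma> \<delta> \<alpha>' \<beta>' \<gamma>' \<delta>' :: int
  assumes y: "y \<in> generate G (insert a (generate G {c, d}))" "y \<notin> generate G {c, d}"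
    and eq: "c [^] \<alpha> \<otimes> d [^] \<beta> \<otimes> y \<otimes> c [^] \<gamma> \<otimes> d [^] \<delta> = c [^] \<alpha>' \<otimes> d [^] \<beta>' \<otimes> y \<otimes> c [^] \<gamma>' \<otimes> d [^] \<delta>'"
  shows "\<beta> = \<beta>' \<and> \<delta> = \<delta>'"
proof -
  obtain k j :: int and v where v: "reduced moduli v" "v \<noteq> []" "fst (last v)"
    and y_eq: "y = c [^] k \<otimes> word_eval G gen v \<otimes> d [^] j"
    using A_minus_H_normal_form[OF y] .
  define v' where "v' = scale_exps (\<lambda>s. if s then 1 else int n) v"
  have val: "free_rep (c [^] p \<otimes> d [^] q \<otimes> y \<otimes> c [^] r \<otimes> d [^] u) []
      = free_lmult moduli False (int n * q) (v' @ cons_syllable False (int n * (j + u)) [])"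
    for p q r u :: int
  proof -
    have "free_lmult moduli False (int n * j) (free_lmult moduli False (int n * u) [])
        = cons_syllable False (int n * (j + u)) []"
      by (simp add: free_lmult_def head_strip_cons_syllable distrib_left add.commute)
    moreover have "[] \<in> reduced_words moduli" "cons_syllable False i [] \<in> reduced_words moduli" for i
      by (simp_all add: reduced_words_def cons_syllable_def)
    ultimately show ?thesis
      using free_rep_word_eval_snoc[OF v] by (simp add: y_eq v'_def free_rep_mult_apply free_rep_maps
          free_rep_c_pow free_rep_d_pow reduced_words_def reduced_free_lmult)
  qed
  have "free_lmult moduli False (int n * \<beta>) (v' @ cons_syllable False (int n * (j + \<delta>)) [])
      = free_lmult moduli False (int n * \<beta>') (v' @ cons_syllable False (int n * (j + \<delta>')) [])"
    using val[of \<alpha> \<beta> \<gamma> \<delta>] val[of \<alpha>' \<beta>' \<gamma>' \<delta>'] eq by simp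
  moreover have "v' \<noteq> []" "fst (last v') \<noteq> False"
    using v(2,3) last_scale_exps[OF v(2)] by (simp_all add: v'_def scale_exps_def)
  ultimately have "int n * \<beta> mod int (moduli False) = int n * \<beta>' mod int (moduli False)
      \<and> int n * (j + \<delta>) = int n * (j + \<delta>')"
    using free_lmult_snoc_inj by blast
  then show ?thesis using n_pos by simp
qed

lemma A_exponents_unique:
  fixes \<alpha> \<beta> \<gamma> \<delta> \<alpha>' \<beta>' \<gamma>' \<delta>' :: int
  assumes "y \<in> generate G (insert a (generate G {c, d}))" "y \<notin> generate G {c, d}"
    and "c [^] \<alpha> \<otimes> d [^] \<beta> \<otimes> y \<otimes> c [^] \<gamma> \<otimes> d [^] \<delta> = c [^] \<alpha>' \<otimes> d [^] \<beta>' \<otimes> y \<otimes> c [^] \<gamma>' \<otimes> d [^] \<delta>'"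
  shows "\<alpha> + \<gamma> = \<alpha>' + \<gamma>' \<and> \<beta> = \<beta>' \<and> \<delta> = \<delta>'"
  using assms A_carrier c_exponent_sum_unique d_exponents_unique by blast

lemma B_exponents_unique:
  fixes \<alpha> \<beta> \<gamma> \<delta> \<alpha>' \<beta>' \<gamma>' \<delta>' :: int
  assumes "y \<in> generate G (insert b (generate G {c, d}))" "y \<notin> generate G {c, d}"
    and eq: "c [^] \<alpha> \<otimes> d [^] \<beta> \<otimes> y \<otimes> c [^] \<gamma> \<otimes> d [^] \<delta> = c [^] \<alpha>' \<otimes> d [^] \<beta>' \<otimes> y \<otimes> c [^] \<gamma>' \<otimes> d [^] \<delta>'"
  shows "\<beta> + \<delta> = \<beta>' + \<delta>' \<and> \<alpha> = \<alpha>' \<and> \<gamma> = \<gamma>'"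
proof -
  interpret swapped: Gmn_presentation G b a n m
    using presents_Gmn_swap[OF presents] m_pos n_pos by unfold_locales
  have y: "y \<in> carrier G"
    using assms(1) swapped.A_carrier by (simp add: insert_commute subset_iff)
  have "c [^] p \<otimes> d [^] q \<otimes> y \<otimes> c [^] r \<otimes> d [^] t = d [^] q \<otimes> c [^] p \<otimes> y \<otimes> d [^] t \<otimes> c [^] r"
    for p q r t :: int
    using int_pow_commute[OF presents_Gmn_group(4)[OF presents]] y by (simp add: m_assoc)
  then show ?thesis
    using swapped.A_exponents_unique[of y \<beta> \<alpha> \<delta> \<gamma> \<beta>' \<alpha>' \<delta>' \<gamma>'] assms
    by (simp add: insert_commute)
qed

end

theorem lemma1:
  fixes G :: "'g monoid" and a b :: 'g and m n :: nat
  assumes "m > 1" and "n > 1" and "presents_Gmn G a b m n"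
  defines "c \<equiv> a [^]\<^bsub>G\<^esub> m"
      and "d \<equiv> b [^]\<^bsub>G\<^esub> n"
  defines "H \<equiv> generate G {c, d}"
  defines "A \<equiv> generate G (insert a H)"
      and "B \<equiv> generate G (insert b H)"
  shows "(\<forall>x y (\<alpha>::int) (\<beta>::int) (\<gamma>::int) (\<delta>::int) (\<alpha>'::int) (\<beta>'::int) (\<gamma>'::int) (\<delta>'::int).
            x \<in> A \<and> y \<in> A \<and> x \<notin> H \<and> y \<notin> H \<and>
            x = c [^]\<^bsub>G\<^esub> \<alpha> \<otimes>\<^bsub>G\<^esub> d [^]\<^bsub>G\<^esub> \<beta> \<otimes>\<^bsub>G\<^esub> y \<otimes>\<^bsub>G\<^esub> c [^]\<^bsub>G\<^esub> \<gamma> \<otimes>\<^bsub>G\<^esub> d [^]\<^bsub>G\<^esub> \<delta> \<and>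
            x = c [^]\<^bsub>G\<^esub> \<alpha>' \<otimes>\<^bsub>G\<^esub> d [^]\<^bsub>G\<^esub> \<beta>' \<otimes>\<^bsub>G\<^esub> y \<otimes>\<^bsub>G\<^esub> c [^]\<^bsub>G\<^esub> \<gamma>' \<otimes>\<^bsub>G\<^esub> d [^]\<^bsub>G\<^esub> \<delta>'
            \<longrightarrow> \<alpha> + \<gamma> = \<alpha>' + \<gamma>' \<and> \<beta> = \<beta>' \<and> \<delta> = \<delta>')
       \<and> (\<forall>x y (\<alpha>::int) (\<beta>::int) (\<gamma>::int) (\<delta>::int) (\<alpha>'::int) (\<beta>'::int) (\<gamma>'::int) (\<delta>'::int).
            x \<in> B \<and> y \<in> B \<and> x \<notin> H \<and> y \<notin> H \<and>
            x = c [^]\<^bsub>G\<^esub> \<alpha> \<otimes>\<^bsub>G\<^esub> d [^]\<^bsub>G\<^esub> \<beta> \<otimes>\<^bsub>G\<^esub> y \<otimes>\<^bsub>G\<^esub> c [^]\<^bsub>G\<^esub> \<gamma> \<otimes>\<^bsub>G\<^esub> d [^]\<^bsub>G\<^esub> \<delta> \<and>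
            x = c [^]\<^bsub>G\<^esub> \<alpha>' \<otimes>\<^bsub>G\<^esub> d [^]\<^bsub>G\<^esub> \<beta>' \<otimes>\<^bsub>G\<^esub> y \<otimes>\<^bsub>G\<^esub> c [^]\<^bsub>G\<^esub> \<gamma>' \<otimes>\<^bsub>G\<^esub> d [^]\<^bsub>G\<^esub> \<delta>'
            \<longrightarrow> \<beta> + \<delta> = \<beta>' + \<delta>' \<and> \<alpha> = \<alpha>' \<and> \<gamma> = \<gamma>')"
proof -
  interpret Gmn_presentation G a b m n
    using assms(1-3) by unfold_locales auto
  show ?thesis
    unfolding A_def B_def H_def c_def d_def
    using A_exponents_unique B_exponents_unique by metis
qed

end
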